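(* Assume A or B, let $e\in E_H$, and let $\lambda>0$ satisfy $\mathbb{P}(\omega_e\ge\lambda)>0$. If $A\subset\Omega_H$ is $e$-increasing with $\mathbb{P}(A)>0$, then $\mathbb{P}(A\cap\{\omega_e\ge\lambda\})>0$.
   Context: $V_H=\{(x_1,x_2)\in\mathbb{Z}^2:x_2\ge0\}$, $E_H$ its nearest-neighbour edges, $\Omega_H=[0,\infty)^{E_H}$; write $\omega=(\omega_e,\check\omega)$ with $\check\omega=(\omega_f)_{f\ne e}$. An event $A\subset\Omega_H$ is $e$-increasing if $(\omega_e,\check\omega)\in A$ and $r>0$ imply $(\omega_e+r,\check\omega)\in A$. A probability measure on $[0,\infty)^{E'}$ has the upward finite energy property if for each $e\in E'$ and $\lambda$ with $\mathbb{P}(\omega_e\ge\lambda)>0$, $\mathbb{P}(\omega_e\ge\lambda\mid\check\omega)>0$ almost surely. Assumption A: $\mathbb{P}$ is a product measure on $\Omega_H$ with i.i.d. continuous marginals. Assumption B: $\mathbb{P}$ is the restriction to $E_H$ of a measure $\hat{\mathbb{P}}$ on $[0,\infty)^{\mathcal{E}^2}$ with the upward finite energy property that is ergodic under $\mathbb{Z}^2$-translations, invariant under all symmetries of $\mathbb{Z}^2$, has $\int\omega_e^{2+\alpha}d\hat{\mathbb{P}}<\infty$ for some $\alpha>0$, unique passage times, and bounded limit shape. *)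

theory Defs
  imports "HOL-Probability.Probability"
begin

type_synonym vertex = "int \<times> int"
type_synonym edge = "vertex set"
type_synonym config = "edge \<Rightarrow> real"

definition adj :: "vertex \<Rightarrow> vertex \<Rightarrow> bool" where
  "adj x y \<longleftrightarrow> \<bar>fst x - fst y\<bar> + \<bar>snd x - snd y\<bar> = 1"

definition E2 :: "edge set" where
  "E2 = {{x, y} | x y. adj x y}"

definition EH :: "edge set" where
  "EH = {{x, y} | x y. adj x y \<and> snd x \<ge> 0 \<and> snd y \<ge> 0}"

definition OmegaH :: "config set" where
  "OmegaH = (\<Pi>\<^sub>E f\<in>EH. {0..})"

definition e_increasing :: "edge \<Rightarrow> config set \<Rightarrow> bool" where
  "e_increasing e A \<longleftrightarrow> (\<forall>\<omega>\<in>A. \<forall>r>0. fun_upd \<omega> e (\<omega> e + r) \<in> A)"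

definition upward_finite_energy :: "edge set \<Rightarrow> config measure \<Rightarrow> bool" where
  "upward_finite_energy E' Q \<longleftrightarrow>
     (\<forall>e\<in>E'. \<forall>lam::real. measure Q {\<omega>\<in>space Q. \<omega> e \<ge> lam} > 0 \<longrightarrow>
        (AE \<omega> in Q. real_cond_exp Q
            (vimage_algebra (space Q) (\<lambda>\<omega>. restrict \<omega> (E' - {e})) (\<Pi>\<^sub>M f\<in>E' - {e}. borel))
            (indicator {\<omega>\<in>space Q. \<omega> e \<ge> lam}) \<omega> > 0))"

definition assmA :: "config measure \<Rightarrow> bool" where
  "assmA P \<longleftrightarrow> (\<exists>\<nu>::real measure. prob_space \<nu> \<and> sets \<nu> = sets borel \<and>
      emeasure \<nu> {0..} = 1 \<and> (\<forall>x. emeasure \<nu> {x} = 0) \<and>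
      P = (\<Pi>\<^sub>M f\<in>EH. \<nu>))"

definition act :: "(vertex \<Rightarrow> vertex) \<Rightarrow> config \<Rightarrow> config" where
  "act \<sigma> \<omega> = restrict (\<lambda>f. \<omega> (\<sigma> ` f)) E2"

definition vshift :: "vertex \<Rightarrow> vertex \<Rightarrow> vertex" where
  "vshift v x = (fst x + fst v, snd x + snd v)"

definition lattice_sym :: "(vertex \<Rightarrow> vertex) \<Rightarrow> bool" where
  "lattice_sym \<sigma> \<longleftrightarrow> bij \<sigma> \<and> (\<forall>x y. adj x y \<longleftrightarrow> adj (\<sigma> x) (\<sigma> y))"

definition ergodic_translations :: "config measure \<Rightarrow> bool" where
  "ergodic_translations Q \<longleftrightarrow>
     (\<forall>B\<in>sets Q. (\<forall>v. act (vshift v) -` B \<inter> space Q = B) \<longrightarrow>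
        measure Q B = 0 \<or> measure Q B = 1)"

definition symmetry_invariant :: "config measure \<Rightarrow> bool" where
  "symmetry_invariant Q \<longleftrightarrow>
     (\<forall>\<sigma>. lattice_sym \<sigma> \<longrightarrow> distr Q (\<Pi>\<^sub>M f\<in>E2. borel) (act \<sigma>) = Q)"

definition moment_cond :: "config measure \<Rightarrow> bool" where
  "moment_cond Q \<longleftrightarrow> (\<exists>\<alpha>>0. \<forall>e\<in>E2.
      (\<integral>\<^sup>+ \<omega>. ennreal (\<bar>\<omega> e\<bar> powr (2 + \<alpha>)) \<partial>Q) < \<infinity>)"

definition is_path :: "vertex list \<Rightarrow> bool" where
  "is_path xs \<longleftrightarrow> xs \<noteq> [] \<and> (\<forall>i. Suc i < length xs \<longrightarrow> adj (xs ! i) (xs ! Suc i))"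

definition path_edges :: "vertex list \<Rightarrow> edge set" where
  "path_edges xs = (\<lambda>i. {xs ! i, xs ! Suc i}) ` {..<length xs - 1}"

definition path_weight :: "config \<Rightarrow> vertex list \<Rightarrow> real" where
  "path_weight \<omega> xs = (\<Sum>i<length xs - 1. \<omega> {xs ! i, xs ! Suc i})"

definition passage_time :: "config \<Rightarrow> vertex \<Rightarrow> vertex \<Rightarrow> real" where
  "passage_time \<omega> x y =
     (INF xs\<in>{xs. is_path xs \<and> hd xs = x \<and> last xs = y}. path_weight \<omega> xs)"

definition unique_passage_times :: "config measure \<Rightarrow> bool" where
  "unique_passage_times Q \<longleftrightarrow>
     (AE \<omega> in Q. \<forall>xs ys. is_path xs \<and> distinct xs \<and> is_path ys \<and> distinct ys \<and>
         path_edges xs \<noteq> path_edges ys \<longrightarrow>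
         (\<Sum>f\<in>path_edges xs. \<omega> f) \<noteq> (\<Sum>f\<in>path_edges ys. \<omega> f))"

text \<open>Bounded limit shape: the time constant g(x) = lim T(0,nx)/n (a.s.) satisfies
  g(x) \<ge> c |x| for some c > 0, i.e. {g \<le> 1} is bounded.\<close>
definition bounded_limit_shape :: "config measure \<Rightarrow> bool" where
  "bounded_limit_shape Q \<longleftrightarrow>
     (\<exists>c>0. \<forall>x::vertex. \<exists>g::real.
        (AE \<omega> in Q. (\<lambda>n. passage_time \<omega> (0, 0) (int n * fst x, int n * snd x) / real n)
                        \<longlonglongrightarrow> g) \<and>
        g \<ge> c * (\<bar>real_of_int (fst x)\<bar> + \<bar>real_of_int (snd x)\<bar>))"

definition assmB :: "config measure \<Rightarrow> bool" where
  "assmB P \<longleftrightarrow> (\<exists>Q. prob_space Q \<and> sets Q = sets (\<Pi>\<^sub>M f\<in>E2. (borel :: real measure)) \<and>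
      (AE \<omega> in Q. \<forall>f\<in>E2. 0 \<le> \<omega> f) \<and>
      upward_finite_energy E2 Q \<and> ergodic_translations Q \<and> symmetry_invariant Q \<and>
      moment_cond Q \<and> unique_passage_times Q \<and> bounded_limit_shape Q \<and>
      P = distr Q (\<Pi>\<^sub>M f\<in>EH. borel) (\<lambda>\<omega>. restrict \<omega> EH))"

end

theory Submission
  imports Defs
begin

text \<open>Let B = {\<omega> e \<ge> \<lambda>} and let E be the set of configurations that land in A once
  \<omega> e is reset to \<lambda>. Since A is e-increasing, A - B \<subseteq> E and E \<inter> B \<subseteq> A \<inter> B, so if
  P(A \<inter> B) = 0 then P(E) \<ge> P(A) > 0 while P(E \<inter> B) = 0. This is impossible because E does
  not depend on \<omega> e: under assumption A, \<omega> e is independent of the other weights, so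
  P(E \<inter> B) = P(E) P(B); under assumption B, E is measurable with respect to the other weights,
  given which B has almost surely positive conditional probability by upward finite energy.\<close>

lemma increasing_fun_upd_mem:
  fixes \<omega> :: "'i \<Rightarrow> 'a::linordered_ab_group_add"
  assumes inc: "\<And>\<omega> r. \<omega> \<in> A \<Longrightarrow> r > 0 \<Longrightarrow> \<omega> (e := \<omega> e + r) \<in> A"
    and "\<omega> \<in> A" and "\<omega> e \<le> x"
  shows "\<omega> (e := x) \<in> A"
proof (cases "\<omega> e = x")
  case True
  then show ?thesis using \<open>\<omega> \<in> A\<close> by (simp add: fun_upd_idem)
next
  case False
  with \<open>\<omega> e \<le> x\<close> have "0 < x - \<omega> e" by simp
  from inc[OF \<open>\<omega> \<in> A\<close> this] show ?thesis by simp
qed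

lemma measure_inter_pos_if_lowering_charges_tail:
  fixes M :: "('i \<Rightarrow> real) measure" and e :: 'i and lam :: real
    and A :: "('i \<Rightarrow> real) set"
  defines "B \<equiv> {\<omega> \<in> space M. lam \<le> \<omega> e}" and "E \<equiv> {\<omega> \<in> space M. \<omega> (e := lam) \<in> A}"
  assumes "finite_measure M" and A: "A \<in> sets M"
    and inc: "\<And>\<omega> r. \<omega> \<in> A \<Longrightarrow> r > 0 \<Longrightarrow> \<omega> (e := \<omega> e + r) \<in> A"
    and B: "B \<in> sets M" and E: "E \<in> sets M"
    and A_pos: "measure M A > 0"
    and charges: "measure M E > 0 \<Longrightarrow> measure M (E \<inter> B) > 0"
  shows "measure M (A \<inter> B) > 0"
proof (rule ccontr)
  interpret finite_measure M by fact
  assume "\<not> ?thesis"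
  then have null: "measure M (A \<inter> B) = 0"
    using measure_nonneg[of M "A \<inter> B"] by linarith
  have "A - B \<subseteq> E"
    using increasing_fun_upd_mem[OF inc] sets.sets_into_space[OF A]
    unfolding B_def E_def by fastforce
  moreover have "E \<inter> B \<subseteq> A \<inter> B"
  proof
    fix \<omega> assume "\<omega> \<in> E \<inter> B"
    then have "\<omega> (e := lam) \<in> A" "(\<omega> (e := lam)) e \<le> \<omega> e" unfolding B_def E_def by auto
    from increasing_fun_upd_mem[OF inc this] have "\<omega> \<in> A"
      by (simp only: fun_upd_upd fun_upd_triv)
    with \<open>\<omega> \<in> E \<inter> B\<close> show "\<omega> \<in> A \<inter> B" by simp
  qed
  ultimately have "measure M A \<le> measure M E" and "measure M (E \<inter> B) \<le> 0"
    using finite_measure_Diff'[OF A B] finite_measure_mono[of "A - B" E]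
      finite_measure_mono[of "E \<inter> B" "A \<inter> B"] null E A B by auto
  with A_pos charges show False by linarith
qed

lemma (in finite_measure_subalgebra) measure_inter_pos_if_cond_exp_pos:
  assumes B: "B \<in> sets M" and cond_pos: "AE x in M. real_cond_exp M F (indicator B) x > 0"
    and E: "E \<in> sets F" and E_pos: "measure M E > 0"
  shows "measure M (E \<inter> B) > 0"
proof -
  define c where "c = real_cond_exp M F (indicator B)"
  have EM: "E \<in> sets M" using E subalg by (auto simp: subalgebra_def)
  have int_B: "integrable M (indicator B :: 'a \<Rightarrow> real)"
    by (rule integrable_real_indicator[OF B]) (simp add: less_top[symmetric])
  have "measure M (E \<inter> B) = (\<integral>x. indicator E x * indicator B x \<partial>M)"
    using EM B by (simp add: indicator_inter_arith[symmetric])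
  also have "\<dots> = (\<integral>x. indicator E x * c x \<partial>M)"
    using real_cond_exp_intA[OF int_B E] unfolding c_def set_lebesgue_integral_def by simp
  finally have meas_eq: "measure M (E \<inter> B) = (\<integral>x. indicator E x * c x \<partial>M)" .
  have int_Ec: "integrable M (\<lambda>x. indicator E x * c x)"
    using integrable_mult_indicator[OF EM real_cond_exp_int(1)[OF int_B]] unfolding c_def by simp
  have nonneg: "AE x in M. 0 \<le> indicator E x * c x"
    using cond_pos unfolding c_def by eventually_elim simp
  have "(\<integral>x. indicator E x * c x \<partial>M) \<noteq> 0"
  proof
    assume "(\<integral>x. indicator E x * c x \<partial>M) = 0"
    then have "AE x in M. indicator E x * c x = 0"
      using integral_nonneg_eq_0_iff_AE[OF int_Ec nonneg] by simp
    then have "AE x in M. x \<notin> E"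
      using cond_pos unfolding c_def by eventually_elim (auto split: split_indicator)
    then have "E \<in> null_sets M"
      using AE_iff_null_sets[OF EM] by simp
    with E_pos show False by (simp add: measure_def null_setsD1)
  qed
  with integral_nonneg_AE[OF nonneg] meas_eq show ?thesis by linarith
qed

lemma measurable_fun_upd_const:
  assumes "J = K \<union> {e}" and "x \<in> space (M e)"
  shows "(\<lambda>\<omega>. \<omega> (e := x)) \<in> measurable (\<Pi>\<^sub>M i\<in>K. M i) (\<Pi>\<^sub>M i\<in>J. M i)"
  using measurable_fun_upd[OF assms(1) measurable_id[of "\<Pi>\<^sub>M i\<in>K. M i"] measurable_const[OF assms(2)]] by simp

lemma fun_upd_preimage_in_vimage_algebra_restrict:
  fixes M :: "'i \<Rightarrow> 'a measure"
  assumes e: "e \<in> J" and x: "x \<in> space (M e)" and A: "A \<in> sets (\<Pi>\<^sub>M i\<in>J. M i)"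
  shows "{\<omega> \<in> space (\<Pi>\<^sub>M i\<in>J. M i). \<omega> (e := x) \<in> A}
    \<in> sets (vimage_algebra (space (\<Pi>\<^sub>M i\<in>J. M i)) (\<lambda>\<omega>. restrict \<omega> (J - {e})) (\<Pi>\<^sub>M i\<in>J - {e}. M i))"
proof -
  define G where "G = {\<eta> \<in> space (\<Pi>\<^sub>M i\<in>J - {e}. M i). \<eta> (e := x) \<in> A}"
  have "G \<in> sets (\<Pi>\<^sub>M i\<in>J - {e}. M i)"
    using measurable_sets[OF measurable_fun_upd_const[of J "J - {e}" e x M] A] e x
    unfolding G_def by (simp add: insert_absorb Collect_conj_eq Int_commute vimage_def)
  moreover have "{\<omega> \<in> space (\<Pi>\<^sub>M i\<in>J. M i). \<omega> (e := x) \<in> A}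
      = (\<lambda>\<omega>. restrict \<omega> (J - {e})) -` G \<inter> space (\<Pi>\<^sub>M i\<in>J. M i)"
  proof -
    have "(restrict \<omega> (J - {e})) (e := x) = \<omega> (e := x)" if "\<omega> \<in> space (\<Pi>\<^sub>M i\<in>J. M i)" for \<omega>
      using that by (auto simp: fun_eq_iff space_PiM PiE_iff extensional_def)
    then show ?thesis
      unfolding G_def using measurable_space[OF measurable_restrict_subset[of "J - {e}" J M]] by auto
  qed
  ultimately show ?thesis by (simp add: in_vimage_algebra)
qed

lemma subalgebra_vimage_restrict:
  assumes "sets Q = sets (\<Pi>\<^sub>M i\<in>J. M i)" and "K \<subseteq> J"
  shows "subalgebra Q (vimage_algebra (space Q) (\<lambda>\<omega>. restrict \<omega> K) (\<Pi>\<^sub>M i\<in>K. M i))"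
proof -
  have "(\<lambda>\<omega>. restrict \<omega> K) \<in> measurable Q (\<Pi>\<^sub>M i\<in>K. M i)"
    using measurable_restrict_subset[OF assms(2)] by (simp add: measurable_cong_sets[OF assms(1) refl])
  from sets_image_in_sets[OF refl this] show ?thesis
    unfolding subalgebra_def by simp
qed

lemma measure_PiM_component_inter_fun_upd_preimage:
  fixes M :: "'i \<Rightarrow> 'a measure" and I :: "'i set"
  defines "P \<equiv> \<Pi>\<^sub>M i\<in>I. M i"
  assumes prob: "\<And>i. i \<in> I \<Longrightarrow> prob_space (M i)" and e: "e \<in> I"
    and X: "X \<in> sets (M e)" and x: "x \<in> space (M e)" and A: "A \<in> sets P"
  shows "measure P ({\<omega> \<in> space P. \<omega> e \<in> X} \<inter> {\<omega> \<in> space P. \<omega> (e := x) \<in> A})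
    = measure (M e) X * measure P {\<omega> \<in> space P. \<omega> (e := x) \<in> A}"
proof -
  interpret P: prob_space P unfolding P_def by (intro prob_space_PiM prob)
  define S where "S = {\<omega> \<in> space P. \<omega> (e := x) \<in> A}"
  define T where "T = (\<lambda>(y, \<omega>). \<omega> (e := y) :: 'i \<Rightarrow> 'a)"
  have T: "T \<in> measurable (M e \<Otimes>\<^sub>M P) P"
    using measurable_fun_upd[of I I e snd "M e \<Otimes>\<^sub>M P" M fst] e
    unfolding P_def T_def by (simp add: insert_absorb case_prod_beta')
  have P_eq: "P = distr (M e \<Otimes>\<^sub>M P) P T"
    using distr_pair_PiM_eq_PiM[of I M e] prob e unfolding P_def T_def by (simp add: insert_absorb)
  have "(\<lambda>\<omega>. \<omega> (e := x)) \<in> measurable P P"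
    unfolding P_def using e x by (intro measurable_fun_upd_const) auto
  from measurable_sets[OF this A] have S: "S \<in> sets P"
    unfolding S_def by (simp add: Collect_conj_eq Int_commute vimage_def)
  have coord: "{\<omega> \<in> space P. \<omega> e \<in> X} \<in> sets P"
    using measurable_sets[OF measurable_component_singleton[OF e, of M] X]
    unfolding P_def by (simp add: vimage_def Collect_conj_eq Int_commute)
  have "T -` ({\<omega> \<in> space P. \<omega> e \<in> X} \<inter> S) \<inter> space (M e \<Otimes>\<^sub>M P) = X \<times> S"
    using sets.sets_into_space[OF X] sets.sets_into_space[OF S] measurable_space[OF T]
    unfolding S_def T_def by (auto simp: space_pair_measure)
  then have "measure P ({\<omega> \<in> space P. \<omega> e \<in> X} \<inter> S) = measure (M e \<Otimes>\<^sub>M P) (X \<times> S)"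
    using P_eq measure_distr[OF T, of "{\<omega> \<in> space P. \<omega> e \<in> X} \<inter> S"] coord S by simp
  also have "\<dots> = measure (M e) X * measure P S"
    using P.emeasure_pair_measure_Times[OF X S] by (simp add: measure_def enn2real_mult)
  finally show ?thesis unfolding S_def .
qed

lemma EH_subset_E2: "EH \<subseteq> E2"
  unfolding EH_def E2_def by blast

lemma measurable_restrict_EH:
  assumes "sets Q = sets (\<Pi>\<^sub>M f\<in>E2. (borel :: real measure))"
  shows "(\<lambda>\<omega>. restrict \<omega> EH) \<in> measurable Q (\<Pi>\<^sub>M f\<in>EH. borel)"
  using measurable_restrict_subset[OF EH_subset_E2, of "\<lambda>_. borel"]
  by (simp add: measurable_cong_sets[OF assms refl])

lemma tail_and_fun_upd_preimage_in_sets: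
  fixes P :: "('i \<Rightarrow> real) measure" and lam :: real
  assumes sets_P: "sets P = sets (\<Pi>\<^sub>M i\<in>I. (borel :: real measure))" and e: "e \<in> I"
    and A: "A \<in> sets P"
  shows "{\<omega> \<in> space P. lam \<le> \<omega> e} \<in> sets P" and "{\<omega> \<in> space P. \<omega> (e := lam) \<in> A} \<in> sets P"
proof -
  have "(\<lambda>\<omega>. \<omega> e) \<in> borel_measurable P"
    using measurable_component_singleton[OF e, of "\<lambda>_. borel"]
    by (simp add: measurable_cong_sets[OF sets_P refl])
  then show "{\<omega> \<in> space P. lam \<le> \<omega> e} \<in> sets P" by measurable
  have "(\<lambda>\<omega>. \<omega> (e := lam)) \<in> measurable P P"
    using measurable_fun_upd_const[of I I e lam "\<lambda>_. borel"] e
    by (simp add: insert_absorb measurable_cong_sets[OF sets_P sets_P])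
  from measurable_sets[OF this A] show "{\<omega> \<in> space P. \<omega> (e := lam) \<in> A} \<in> sets P"
    by (simp add: vimage_def Collect_conj_eq Int_commute)
qed

lemma prob_space_sets_if_assm:
  assumes "assmA P \<or> assmB P"
  shows "prob_space P" and "sets P = sets (\<Pi>\<^sub>M f\<in>EH. (borel :: real measure))"
proof -
  have "prob_space P \<and> sets P = sets (\<Pi>\<^sub>M f\<in>EH. (borel :: real measure))"
  proof (cases "assmA P")
    case True
    then obtain \<nu> :: "real measure" where "prob_space \<nu>" "sets \<nu> = sets borel" "P = (\<Pi>\<^sub>M f\<in>EH. \<nu>)"
      unfolding assmA_def by blast
    then show ?thesis using sets_PiM_cong[of EH EH "\<lambda>_. \<nu>" "\<lambda>_. borel"] by (simp add: prob_space_PiM)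
  next
    case False
    with assms obtain Q where "prob_space Q" "sets Q = sets (\<Pi>\<^sub>M f\<in>E2. (borel :: real measure))"
      and "P = distr Q (\<Pi>\<^sub>M f\<in>EH. borel) (\<lambda>\<omega>. restrict \<omega> EH)"
      unfolding assmB_def by blast
    then show ?thesis by (simp add: prob_space.prob_space_distr measurable_restrict_EH)
  qed
  then show "prob_space P" and "sets P = sets (\<Pi>\<^sub>M f\<in>EH. (borel :: real measure))" by auto
qed

lemma assmA_lowering_charges_tail:
  fixes P :: "config measure" and e :: edge and lam :: real and A :: "config set"
  defines "B \<equiv> {\<omega> \<in> space P. lam \<le> \<omega> e}" and "E \<equiv> {\<omega> \<in> space P. \<omega> (e := lam) \<in> A}"
  assumes "assmA P" and e: "e \<in> EH" and A: "A \<in> sets P"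
    and B_pos: "measure P B > 0" and E_pos: "measure P E > 0"
  shows "measure P (E \<inter> B) > 0"
proof -
  obtain \<nu> :: "real measure" where \<nu>: "prob_space \<nu>" "sets \<nu> = sets borel"
    and P_def: "P = (\<Pi>\<^sub>M f\<in>EH. \<nu>)"
    using \<open>assmA P\<close> unfolding assmA_def by blast
  have lam: "lam \<in> space \<nu>" and tail: "{lam..} \<in> sets \<nu>"
    using \<nu>(2) sets_eq_imp_space_eq[OF \<nu>(2)] by auto
  have B_eq: "B = {\<omega> \<in> space P. \<omega> e \<in> {lam..}}"
    unfolding B_def by auto
  have "{\<omega> \<in> space P. \<omega> (e := lam) \<in> space P} = space P"
    using lam e unfolding P_def by (auto simp: space_PiM PiE_iff extensional_def)
  then have "measure P B = measure \<nu> {lam..}"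
    using measure_PiM_component_inter_fun_upd_preimage[where M="\<lambda>_. \<nu>", OF \<nu>(1) e tail lam sets.top]
      prob_space.prob_space[OF prob_space_PiM[OF \<nu>(1), of EH]]
    unfolding B_eq P_def by (simp add: Int_absorb2)
  moreover have "measure P (E \<inter> B) = measure \<nu> {lam..} * measure P E"
    using measure_PiM_component_inter_fun_upd_preimage[where M="\<lambda>_. \<nu>", OF \<nu>(1) e tail lam A[unfolded P_def]]
    unfolding B_eq E_def P_def by (simp add: Int_commute)
  ultimately show ?thesis using B_pos E_pos by simp
qed

lemma assmB_lowering_charges_tail:
  fixes P :: "config measure" and e :: edge and lam :: real and A :: "config set"
  defines "B \<equiv> {\<omega> \<in> space P. lam \<le> \<omega> e}" and "E \<equiv> {\<omega> \<in> space P. \<omega> (e := lam) \<in> A}"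
  assumes "assmB P" and e: "e \<in> EH" and A: "A \<in> sets P"
    and B_pos: "measure P B > 0" and E_pos: "measure P E > 0"
  shows "measure P (E \<inter> B) > 0"
proof -
  obtain Q where "prob_space Q" and sets_Q: "sets Q = sets (\<Pi>\<^sub>M f\<in>E2. (borel :: real measure))"
    and ufe: "upward_finite_energy E2 Q"
    and P_def: "P = distr Q (\<Pi>\<^sub>M f\<in>EH. borel) (\<lambda>\<omega>. restrict \<omega> EH)"
    using \<open>assmB P\<close> unfolding assmB_def by blast
  interpret Q: prob_space Q by fact
  let ?R = "\<lambda>\<omega>::config. restrict \<omega> EH"
  let ?H = "\<lambda>\<omega>::config. restrict \<omega> (E2 - {e})"
  let ?F = "vimage_algebra (space Q) ?H (\<Pi>\<^sub>M f\<in>E2 - {e}. (borel :: real measure))"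
  define B' where "B' = {\<omega> \<in> space Q. lam \<le> \<omega> e}"
  define E' where "E' = {\<omega> \<in> space Q. \<omega> (e := lam) \<in> ?R -` A \<inter> space Q}"
  have e2: "e \<in> E2" using e EH_subset_E2 by blast
  have space_Q: "space Q = space (\<Pi>\<^sub>M f\<in>E2. (borel :: real measure))"
    using sets_eq_imp_space_eq[OF sets_Q] .
  have R: "?R \<in> measurable Q (\<Pi>\<^sub>M f\<in>EH. borel)"
    using measurable_restrict_EH[OF sets_Q] .
  have measure_P: "measure P X = measure Q (?R -` X \<inter> space Q)" if "X \<in> sets P" for X
    using that R unfolding P_def by (simp add: measure_distr)
  have "?R -` B \<inter> space Q = B'" and "?R -` E \<inter> space Q = E'"
  proof -
    have "?R \<omega> \<in> space P" and "\<omega> (e := lam) \<in> space Q" and "?R (\<omega> (e := lam)) = (?R \<omega>) (e := lam)"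
      if "\<omega> \<in> space Q" for \<omega>
      using measurable_space[OF R that] that e e2 unfolding P_def space_Q
      by (auto simp: space_PiM PiE_iff extensional_def fun_eq_iff)
    then show "?R -` B \<inter> space Q = B'" and "?R -` E \<inter> space Q = E'"
      unfolding B_def B'_def E_def E'_def using e by auto
  qed
  moreover have "B \<in> sets P" "E \<in> sets P"
    using tail_and_fun_upd_preimage_in_sets[OF _ e A] R unfolding B_def E_def P_def by auto
  ultimately have meas: "measure P B = measure Q B'" "measure P E = measure Q E'"
    "measure P (E \<inter> B) = measure Q (E' \<inter> B')"
    using measure_P[of B] measure_P[of E] measure_P[of "E \<inter> B"] by (auto simp: vimage_Int Int_assoc Int_left_commute)
  interpret finite_measure_subalgebra Q ?F
    by unfold_locales (rule subalgebra_vimage_restrict[OF sets_Q Diff_subset])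
  have "E' \<in> sets ?F"
    using fun_upd_preimage_in_vimage_algebra_restrict[OF e2, of lam "\<lambda>_. borel" "?R -` A \<inter> space Q"]
      measurable_sets[OF R, of A] A sets_Q space_Q unfolding E'_def P_def by simp
  moreover have "AE \<omega> in Q. real_cond_exp Q ?F (indicator B') \<omega> > 0"
    using ufe e2 B_pos meas(1) unfolding upward_finite_energy_def B'_def by auto
  moreover have "B' \<in> sets Q"
    using \<open>B \<in> sets P\<close> \<open>?R -` B \<inter> space Q = B'\<close> measurable_sets[OF R] unfolding P_def by auto
  ultimately show ?thesis
    using measure_inter_pos_if_cond_exp_pos[of B' E'] E_pos meas by simp
qed

theorem lemma4p6:
  fixes P :: "config measure" and e :: edge and lam :: real and A :: "config set"
  assumes "assmA P \<or> assmB P"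
    and "e \<in> EH"
    and "lam > 0"
    and "measure P {\<omega> \<in> space P. \<omega> e \<ge> lam} > 0"
    and "A \<in> sets P" and "A \<subseteq> OmegaH"
    and "e_increasing e A"
    and "measure P A > 0"
  shows "measure P (A \<inter> {\<omega> \<in> space P. \<omega> e \<ge> lam}) > 0"
proof (rule measure_inter_pos_if_lowering_charges_tail)
  show "finite_measure P"
    using prob_space_sets_if_assm(1)[OF assms(1)] by (rule prob_space.finite_measure)
  show "{\<omega> \<in> space P. lam \<le> \<omega> e} \<in> sets P" "{\<omega> \<in> space P. \<omega> (e := lam) \<in> A} \<in> sets P"
    using tail_and_fun_upd_preimage_in_sets[OF prob_space_sets_if_assm(2)[OF assms(1)] assms(2,5)] by auto
  show "\<And>\<omega> r. \<omega> \<in> A \<Longrightarrow> r > 0 \<Longrightarrow> \<omega> (e := \<omega> e + r) \<in> A"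
    using \<open>e_increasing e A\<close> unfolding e_increasing_def by blast
  show "measure P ({\<omega> \<in> space P. \<omega> (e := lam) \<in> A} \<inter> {\<omega> \<in> space P. lam \<le> \<omega> e}) > 0"
    if "measure P {\<omega> \<in> space P. \<omega> (e := lam) \<in> A} > 0"
    using assms(1) assmA_lowering_charges_tail assmB_lowering_charges_tail assms(2,4,5) that by blast
qed (fact assms)+

end
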